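(* Let $\Gamma=(N,A,u)$ be a finite game that admits a correlated equilibrium $p\in\Delta A$ all of whose coordinates are rational numbers. Then there exists a finite set of message profiles $M=\times_{i\in N}M_i$ such that every outcome $\mu\in\Delta A$ with $\mathrm{supp}(\mu)\subseteq\mathrm{supp}(p)$ is implemented by some partially specified data-generating process $\mathcal{D}=(M,\eta,\mathcal{F})$.
   Context: A finite game $\Gamma=(N,A,u)$ has a finite set of players $N$, finite action sets $A_i$, $A=\times_{i\in N}A_i$, and utilities $u_i:A\to\mathbb{R}$ (extended multilinearly to mixed action profiles). A correlated equilibrium is $p\in\Delta A$ such that for all $i$, all $a_i$ with $\sum_{a_{-i}}p_{a_i,a_{-i}}>0$, and all $b\in A_i$: $\sum_{a_{-i}}p_{a_i,a_{-i}}[u_i(a_i,a_{-i})-u_i(b,a_{-i})]\ge 0$. A partially specified data-generating process is a triple $\mathcal{D}=(M,\eta,\mathcal{F})$ with $M=\times_iM_i$ finite, $\eta\in\Delta M$, $\mathcal{F}\subseteq\{f:M\to\mathbb{R}\}$. Let $\Delta_{\mathcal{D}}=\{q\in\Delta M:\sum_mq_mf(m)=\sum_m\eta_mf(m)\ \forall f\in\mathcal{F}\}$; the belief is the unique maximizer $q$ of $\mathcal{H}(q)=-\sum_mq_m\log q_m$ over $\Delta_{\mathcal{D}}$. A strategy profile is $\sigma=(\sigma_i)$, $\sigma_i:M_i\to\Delta A_i$, $\sigma(a\mid m)=\prod_i\sigma_i(a_i\mid m_i)$, and $(\eta\circ\sigma)(a)=\sum_m\eta_m\sigma(a\mid m)$.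 $\mu\in\Delta A$ is implemented by $\mathcal{D}$ if there is $\sigma$ with (i) $q$ the maximum-entropy belief; (ii) for all $i$, all $m_i$ with positive $q$-marginal, all $a_i'\in A_i$: $\sum_{m_{-i}}q_{m_i,m_{-i}}[u_i(\sigma_i(m_i),\sigma_{-i}(m_{-i}))-u_i(a_i',\sigma_{-i}(m_{-i}))]\ge0$; (iii) $\mu=\eta\circ\sigma$. *)

theory Defs
  imports Complex_Main
begin

(* Players are the elements of a finite type 'n; A i is the (finite) action set of
   player i; profiles A is the product set  X_i A_i  (as total functions). *)
definition profiles :: "('n \<Rightarrow> 'a set) \<Rightarrow> ('n \<Rightarrow> 'a) set" where
  "profiles A = {a. \<forall>i. a i \<in> A i}"

definition Delta :: "'b set \<Rightarrow> ('b \<Rightarrow> real) set" where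
  "Delta S = {p. (\<forall>x\<in>S. 0 \<le> p x) \<and> (\<forall>x. x \<notin> S \<longrightarrow> p x = 0) \<and> sum p S = 1}"

(* Multilinear extension of u i to mixed action profiles tau (tau j a = prob. of action a) *)
definition EU :: "('n::finite \<Rightarrow> 'a set) \<Rightarrow> ('n \<Rightarrow> ('n \<Rightarrow> 'a) \<Rightarrow> real) \<Rightarrow> 'n
                  \<Rightarrow> ('n \<Rightarrow> 'a \<Rightarrow> real) \<Rightarrow> real" where
  "EU A u i tau = (\<Sum>a\<in>profiles A. (\<Prod>j\<in>UNIV. tau j (a j)) * u i a)"

definition point_mass :: "'a \<Rightarrow> 'a \<Rightarrow> real" where
  "point_mass b = (\<lambda>x. if x = b then 1 else 0)"

definition correlated_eq :: "('n::finite \<Rightarrow> 'a set) \<Rightarrow> ('n \<Rightarrow> ('n \<Rightarrow> 'a) \<Rightarrow> real)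
                              \<Rightarrow> (('n \<Rightarrow> 'a) \<Rightarrow> real) \<Rightarrow> bool" where
  "correlated_eq A u p \<longleftrightarrow> p \<in> Delta (profiles A) \<and>
     (\<forall>i. \<forall>ai \<in> A i. (\<Sum>a\<in>{a\<in>profiles A. a i = ai}. p a) > 0 \<longrightarrow>
        (\<forall>b\<in>A i. (\<Sum>a\<in>{a\<in>profiles A. a i = ai}. p a * (u i a - u i (a(i := b)))) \<ge> 0))"

definition DeltaD :: "('n \<Rightarrow> 'm set) \<Rightarrow> (('n \<Rightarrow> 'm) \<Rightarrow> real) \<Rightarrow> ((('n \<Rightarrow> 'm) \<Rightarrow> real) set)
                       \<Rightarrow> (('n \<Rightarrow> 'm) \<Rightarrow> real) set" where
  "DeltaD M eta F = {q \<in> Delta (profiles M).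
      \<forall>f\<in>F. (\<Sum>m\<in>profiles M. q m * f m) = (\<Sum>m\<in>profiles M. eta m * f m)}"

definition entropy :: "'b set \<Rightarrow> ('b \<Rightarrow> real) \<Rightarrow> real" where
  "entropy S q = - (\<Sum>m\<in>S. (if q m = 0 then 0 else q m * ln (q m)))"

definition is_maxent_belief :: "('n \<Rightarrow> 'm set) \<Rightarrow> (('n \<Rightarrow> 'm) \<Rightarrow> real) \<Rightarrow> ((('n \<Rightarrow> 'm) \<Rightarrow> real) set)
                       \<Rightarrow> (('n \<Rightarrow> 'm) \<Rightarrow> real) \<Rightarrow> bool" where
  "is_maxent_belief M eta F q \<longleftrightarrow> q \<in> DeltaD M eta F \<and>
     (\<forall>q'\<in>DeltaD M eta F. entropy (profiles M) q' \<le> entropy (profiles M) q) \<and>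
     (\<forall>q'\<in>DeltaD M eta F. entropy (profiles M) q' = entropy (profiles M) q \<longrightarrow> q' = q)"

definition compose :: "('n::finite \<Rightarrow> 'm set) \<Rightarrow> (('n \<Rightarrow> 'm) \<Rightarrow> real)
                        \<Rightarrow> ('n \<Rightarrow> 'm \<Rightarrow> 'a \<Rightarrow> real) \<Rightarrow> ('n \<Rightarrow> 'a) \<Rightarrow> real" where
  "compose M eta sigma a = (\<Sum>m\<in>profiles M. eta m * (\<Prod>i\<in>UNIV. sigma i (m i) (a i)))"

definition implemented :: "('n::finite \<Rightarrow> 'a set) \<Rightarrow> ('n \<Rightarrow> ('n \<Rightarrow> 'a) \<Rightarrow> real)
     \<Rightarrow> ('n \<Rightarrow> 'm set) \<Rightarrow> (('n \<Rightarrow> 'm) \<Rightarrow> real) \<Rightarrow> ((('n \<Rightarrow> 'm) \<Rightarrow> real) set)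
     \<Rightarrow> (('n \<Rightarrow> 'a) \<Rightarrow> real) \<Rightarrow> bool" where
  "implemented A u M eta F mu \<longleftrightarrow>
    (\<exists>sigma :: 'n \<Rightarrow> 'm \<Rightarrow> 'a \<Rightarrow> real. \<exists>q.
       (\<forall>i. \<forall>mi\<in>M i. sigma i mi \<in> Delta (A i)) \<and>
       is_maxent_belief M eta F q \<and>
       (\<forall>i. \<forall>mi\<in>M i. (\<Sum>m\<in>{m\<in>profiles M. m i = mi}. q m) > 0 \<longrightarrow>
          (\<forall>a'\<in>A i. (\<Sum>m\<in>{m\<in>profiles M. m i = mi}.
              q m * (EU A u i (\<lambda>j. sigma j (m j))
                     - EU A u i ((\<lambda>j. sigma j (m j))(i := point_mass a')))) \<ge> 0)) \<and>
       mu = compose M eta sigma)"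

end

theory Submission
  imports Defs
begin

(* Write p as the empirical distribution of a list L of K profiles, which is possible because
   p is rational. The mediator draws shares x : N -> {0..<K} uniformly, takes the token
   t = (sum of the shares) mod K and sends each player i the pair (x i, (L ! t) i). If there
   is another player j, then for fixed x i the share x j makes t uniform, so conditioned on
   player i's message the recommended profile is distributed as p given a i; obeying the
   recommendation is then the correlated-equilibrium inequality. (With a single player the
   message reveals the whole profile, and obedience holds profile by profile.)
   The data-generating process only forces the belief to vanish outside the set of possible
   messages, so the maximum-entropy belief is uniform on that set whatever the true
   distribution eta is, and eta can be chosen to realise any mu supported in the support of p. *)

lemma finite_profiles:
  assumes "\<And>i. finite (B i)"
  shows "finite (profiles (B :: 'n::finite \<Rightarrow> 'b set))"
proof (rule finite_subset)
  show "profiles B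
      \<subseteq> {f. \<forall>x. (x \<in> UNIV \<longrightarrow> f x \<in> (\<Union>i. B i)) \<and> (x \<notin> UNIV \<longrightarrow> f x = undefined)}"
    by (auto simp: profiles_def)
qed (use assms in \<open>intro finite_set_of_finite_funs; simp\<close>)

lemma prod_point_mass:
  "(\<Prod>j\<in>UNIV. point_mass (c j) (a j)) = (if a = (c :: 'n::finite \<Rightarrow> 'a) then 1 else 0)"
proof (cases "a = c")
  case False
  then obtain j where "a j \<noteq> c j" by auto
  then have "point_mass (c j) (a j) = 0" by (simp add: point_mass_def)
  then show ?thesis using False by (metis finite UNIV_I prod_zero)
qed (simp add: point_mass_def)

lemma EU_point_mass:
  assumes "\<And>i. finite (A i)" and "c \<in> profiles A"
  shows "EU A u i (\<lambda>j. point_mass (c j)) = u i c"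
proof -
  have "EU A u i (\<lambda>j. point_mass (c j)) = (\<Sum>a\<in>profiles A. if a = c then u i a else 0)"
    unfolding EU_def prod_point_mass by (intro sum.cong) auto
  then show ?thesis using assms finite_profiles[of A] by simp
qed

lemma point_mass_in_Delta: "finite S \<Longrightarrow> b \<in> S \<Longrightarrow> point_mass b \<in> Delta S"
  unfolding Delta_def point_mass_def by (auto simp: sum.delta')

lemma xlnx_tangent_le:
  fixes c y :: real
  assumes "c > 0" and "y \<ge> 0"
  shows "y * ln c + y - c \<le> (if y = 0 then 0 else y * ln y)"
    and "(if y = 0 then 0 else y * ln y) = y * ln c + y - c \<Longrightarrow> y = c"
proof -
  show "y * ln c + y - c \<le> (if y = 0 then 0 else y * ln y)"
  proof (cases "y = 0")
    case False
    then have "y > 0" using assms by simp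
    then have "y * ln (c / y) \<le> y * (c / y - 1)"
      using assms ln_le_minus_one[of "c / y"] by (intro mult_left_mono) auto
    then show ?thesis using \<open>y > 0\<close> assms by (simp add: ln_div algebra_simps)
  qed (use assms in simp)
  assume eq: "(if y = 0 then 0 else y * ln y) = y * ln c + y - c"
  then have "y > 0" using assms by (cases "y = 0") auto
  then have "y * ln (c / y) = y * (c / y - 1)"
    using eq assms by (simp add: ln_div algebra_simps)
  then have "ln (c / y) = c / y - 1" using \<open>y > 0\<close> by simp
  then have "c / y = 1" using ln_eq_minus_one[of "c / y"] \<open>y > 0\<close> assms by simp
  then show "y = c" using \<open>y > 0\<close> by simp
qed

definition uniform :: "'b set \<Rightarrow> 'b \<Rightarrow> real" where
  "uniform S m = (if m \<in> S then 1 / real (card S) else 0)"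

lemma uniform_in_Delta:
  assumes "finite P" "S \<subseteq> P" "S \<noteq> {}"
  shows "uniform S \<in> Delta P"
proof -
  have "finite S" using assms finite_subset by blast
  then have "sum (uniform S) P = sum (uniform S) S"
    using assms by (intro sum.mono_neutral_right) (auto simp: uniform_def)
  also have "\<dots> = 1" using \<open>finite S\<close> assms by (simp add: uniform_def)
  finally show ?thesis using assms by (auto simp: Delta_def uniform_def)
qed

lemma entropy_le_uniform:
  assumes "finite P" "S \<subseteq> P" "S \<noteq> {}"
    and q: "q \<in> Delta P" "\<forall>m\<in>P - S. q m = 0"
  shows "entropy P q \<le> entropy P (uniform S)"
    and "entropy P q = entropy P (uniform S) \<Longrightarrow> q = uniform S"
proof -
  define c where "c = 1 / real (card S)"
  define xlnx :: "real \<Rightarrow> real" where "xlnx y = (if y = 0 then 0 else y * ln y)" for y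
  have "finite S" using assms finite_subset by blast
  then have "c > 0" using assms by (simp add: c_def card_gt_0_iff)
  have q_nonneg: "\<forall>m\<in>S. q m \<ge> 0" using q assms by (auto simp: Delta_def)
  have "sum q S = sum q P"
    using q assms by (intro sum.mono_neutral_left) auto
  then have "sum q S = 1" using q by (simp add: Delta_def)
  have restrict: "entropy P f = - (\<Sum>m\<in>S. xlnx (f m))" if "\<forall>m\<in>P - S. f m = 0" for f
    unfolding entropy_def xlnx_def using assms that
    by (simp add: sum.mono_neutral_left[of P S])
  have entropy_uniform: "entropy P (uniform S) = - (\<Sum>m\<in>S. q m * ln c + q m - c)"
  proof -
    have "entropy P (uniform S) = - (\<Sum>m\<in>S. c * ln c)"
      using restrict[of "uniform S"] \<open>c > 0\<close> by (simp add: uniform_def xlnx_def c_def)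
    also have "\<dots> = - (\<Sum>m\<in>S. q m * ln c + q m - c)"
      using \<open>sum q S = 1\<close> \<open>finite S\<close> assms
      by (simp add: sum.distrib sum_subtractf sum_distrib_right[symmetric] c_def)
    finally show ?thesis .
  qed
  \<comment> \<open>Gibbs: x ln x lies above its tangent at c = 1 / card S, and as sum q S = 1 these
    tangents add up to the value at the uniform distribution.\<close>
  have tangent: "\<forall>m\<in>S. q m * ln c + q m - c \<le> xlnx (q m)"
    using xlnx_tangent_le(1)[OF \<open>c > 0\<close>] q_nonneg by (simp add: xlnx_def)
  show "entropy P q \<le> entropy P (uniform S)"
    unfolding restrict[OF q(2)] entropy_uniform using sum_mono[OF tangent[rule_format]] by simp
  assume "entropy P q = entropy P (uniform S)"
  then have "(\<Sum>m\<in>S. xlnx (q m) - (q m * ln c + q m - c)) = 0"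
    unfolding restrict[OF q(2)] entropy_uniform by (simp add: sum_subtractf)
  then have "\<forall>m\<in>S. xlnx (q m) = q m * ln c + q m - c"
    using tangent \<open>finite S\<close> by (subst (asm) sum_nonneg_eq_0_iff) auto
  then have "\<forall>m\<in>S. q m = c"
    using xlnx_tangent_le(2)[OF \<open>c > 0\<close>] q_nonneg by (simp add: xlnx_def)
  then show "q = uniform S"
    using q by (auto simp: uniform_def c_def fun_eq_iff Delta_def)
qed

lemma sum_list_map_eq_sum_of_count:
  "sum_list (map f xs) = (\<Sum>x\<in>set xs. of_nat (count_list xs x) * (f x :: 'b::semiring_1))"
proof (induction xs)
  case (Cons a xs)
  have "(\<Sum>x\<in>set (a # xs). of_nat (count_list (a # xs) x) * f x)
      = (\<Sum>x\<in>insert a (set xs). of_nat (count_list xs x) * f x + (if x = a then f x else 0))"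
    by (intro sum.cong) (auto simp: algebra_simps)
  also have "\<dots> = f a + (\<Sum>x\<in>set xs. of_nat (count_list xs x) * f x)"
    by (cases "a \<in> set xs") (simp_all add: sum.distrib insert_absorb add.commute)
  finally show ?case using Cons by simp
qed simp

lemma rational_weights_common_denominator:
  fixes p :: "'b \<Rightarrow> real"
  assumes "finite P" and "\<forall>a\<in>P. p a \<in> \<rat> \<and> p a \<ge> 0"
  obtains K :: nat and k :: "'b \<Rightarrow> nat" where "K > 0" and "\<forall>a\<in>P. p a = real (k a) / real K"
  using assms
proof (induction P arbitrary: thesis rule: finite_induct)
  case empty
  then show ?case by (metis empty_iff zero_less_one)
next
  case (insert x F)
  then obtain K k where K: "K > 0" "\<forall>a\<in>F. p a = real (k a) / real K" by auto
  from insert.prems obtain n d :: nat where nd: "d \<noteq> 0" "p x = real n / real d"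
    by (metis Rats_abs_nat_div_natE abs_of_nonneg insert_iff)
  define k' where "k' a = (if a = x then n * K else k a * d)" for a
  have "\<forall>a\<in>insert x F. p a = real (k' a) / real (K * d)"
    using K nd by (auto simp: k'_def)
  moreover have "K * d > 0" using K nd by simp
  ultimately show ?case using insert.prems(1) by blast
qed

lemma rational_distribution_empirical:
  assumes "finite P" and p: "p \<in> Delta P" and rat: "\<forall>a. p a \<in> \<rat>"
  obtains L where "L \<noteq> []" and "\<And>a. real (count_list L a) = real (length L) * p a"
proof -
  have "\<forall>a\<in>P. p a \<in> \<rat> \<and> p a \<ge> 0" using p rat by (simp add: Delta_def)
  then obtain K k where K: "K > 0" and k: "\<forall>a\<in>P. p a = real (k a) / real K"
    using rational_weights_common_denominator[OF \<open>finite P\<close>] by blast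
  obtain as where as: "set as = P" "distinct as" using finite_distinct_list[OF \<open>finite P\<close>] by blast
  define L where "L = concat (map (\<lambda>a. replicate (k a) a) as)"
  have count_replicate: "count_list (replicate n a) b = (if a = b then n else 0)" for n a b
    by (induction n) auto
  have count: "count_list L a = (if a \<in> P then k a else 0)" for a
    using as \<open>finite P\<close> by (simp add: L_def count_list_concat o_def count_replicate
        sum_list_distinct_conv_sum_set)
  have count_real: "real (count_list L a) = real K * p a" for a
    using k K p by (auto simp: count Delta_def)
  have "real (length L) = real K"
  proof -
    have "length L = sum (count_list L) P"
      using as by (intro sum_count_set[symmetric]) (auto simp: L_def \<open>finite P\<close>)
    then have "real (length L) = (\<Sum>a\<in>P. real K * p a)" by (simp add: count_real)
    also have "\<dots> = real K" using p by (simp add: Delta_def sum_distrib_left[symmetric])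
    finally show ?thesis .
  qed
  then have "length L = K" by simp
  then show ?thesis using that K count_real by auto
qed

lemma correlated_eq_obedient:
  assumes fin: "\<And>i. finite (A i)" and ce: "correlated_eq A u p"
    and a: "a \<in> profiles A" "p a > 0" and b: "b \<in> A i"
  shows "0 \<le> (\<Sum>a'\<in>{a'\<in>profiles A. a' i = a i}. p a' * (u i a' - u i (a'(i := b))))"
proof -
  have p_nonneg: "p a' \<ge> 0" for a'
    using ce by (cases "a' \<in> profiles A") (auto simp: correlated_eq_def Delta_def)
  have "p a \<le> (\<Sum>a'\<in>{a'\<in>profiles A. a' i = a i}. p a')"
    using a finite_profiles[of A, OF fin] p_nonneg by (intro member_le_sum) auto
  moreover have "a i \<in> A i" using a by (simp add: profiles_def)
  ultimately show ?thesis using ce b a unfolding correlated_eq_def by auto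
qed

lemma correlated_eq_single_player:
  assumes fin: "\<And>i. finite (A i)" and ce: "correlated_eq A u p" and single: "\<forall>j. j = i"
    and a: "a \<in> profiles A" "p a > 0" and b: "b \<in> A i"
  shows "u i (a(i := b)) \<le> u i a"
proof -
  have "{a'\<in>profiles A. a' i = a i} = {a}"
    using a single by (auto intro: ext)
  then show ?thesis
    using correlated_eq_obedient[OF fin ce a b] a by (simp add: zero_le_mult_iff)
qed

lemma mod_add_eq_iff:
  fixes K s a t :: nat
  assumes "a < K" "t < K"
  shows "(s + a) mod K = t \<longleftrightarrow> a = (t + K - s mod K) mod K"
proof -
  define r where "r = s mod K"
  have "r < K" using assms by (simp add: r_def)
  have "(s + a) mod K = (r + a) mod K" by (simp add: mod_add_left_eq r_def)
  also have "\<dots> = (if r + a < K then r + a else r + a - K)"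
    using \<open>r < K\<close> assms by (simp add: le_mod_geq)
  moreover have "(t + K - r) mod K = (if t + K - r < K then t + K - r else t - r)"
    using \<open>r < K\<close> assms by (simp add: le_mod_geq)
  ultimately show ?thesis using \<open>r < K\<close> assms by (auto simp: r_def[symmetric])
qed

definition shares :: "nat \<Rightarrow> ('n \<Rightarrow> nat) set" where
  "shares K = {x. \<forall>j. x j < K}"

lemma finite_shares: "finite (shares K :: ('n::finite \<Rightarrow> nat) set)"
  using finite_profiles[of "\<lambda>_::'n. {..<K}"] by (simp add: shares_def profiles_def)

lemma card_shares_with_sum:
  fixes i j :: "'n::finite"
  assumes "j \<noteq> i" and "t < K"
  shows "card {x\<in>shares K. x i = v \<and> (\<Sum>l\<in>UNIV. x l) mod K = t}
       = card {x\<in>shares K. x i = v \<and> x j = 0}"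
proof -
  define rest where "rest x = (\<Sum>l\<in>UNIV - {j}. x l)" for x :: "'n \<Rightarrow> nat"
  have sum_split: "(\<Sum>l\<in>UNIV. x l) = rest x + x j" for x
    unfolding rest_def by (simp add: sum.remove[of UNIV j] add.commute)
  have rest_upd: "rest (x(j := c)) = rest x" for x c
    unfolding rest_def by (intro sum.cong) auto
  define fill where "fill x = x(j := (t + K - rest x mod K) mod K)" for x
  have fill_lt: "(t + K - rest x mod K) mod K < K" for x using assms by simp
  have "bij_betw fill {x\<in>shares K. x i = v \<and> x j = 0}
      {x\<in>shares K. x i = v \<and> (\<Sum>l\<in>UNIV. x l) mod K = t}"
  proof (rule bij_betw_byWitness[where f' = "\<lambda>x. x(j := 0)"])
    show "\<forall>x\<in>{x\<in>shares K. x i = v \<and> x j = 0}. (fill x)(j := 0) = x"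
      by (auto simp: fill_def fun_eq_iff)
    show "\<forall>x\<in>{x\<in>shares K. x i = v \<and> (\<Sum>l\<in>UNIV. x l) mod K = t}. fill (x(j := 0)) = x"
    proof
      fix x assume "x \<in> {x\<in>shares K. x i = v \<and> (\<Sum>l\<in>UNIV. x l) mod K = t}"
      then have "x j = (t + K - rest x mod K) mod K"
        using mod_add_eq_iff[of "x j" K t "rest x"] assms by (auto simp: shares_def sum_split)
      then show "fill (x(j := 0)) = x" by (auto simp: fill_def rest_upd fun_eq_iff)
    qed
    show "fill ` {x\<in>shares K. x i = v \<and> x j = 0}
        \<subseteq> {x\<in>shares K. x i = v \<and> (\<Sum>l\<in>UNIV. x l) mod K = t}"
      using mod_add_eq_iff[OF fill_lt \<open>t < K\<close>] fill_lt assms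
      by (auto simp: fill_def rest_upd sum_split shares_def)
    show "(\<lambda>x. x(j := 0)) ` {x\<in>shares K. x i = v \<and> (\<Sum>l\<in>UNIV. x l) mod K = t}
        \<subseteq> {x\<in>shares K. x i = v \<and> x j = 0}"
      using assms by (auto simp: shares_def)
  qed
  then show ?thesis by (simp add: bij_betw_same_card)
qed

definition zero_outside :: "('n \<Rightarrow> 'm set) \<Rightarrow> ('n \<Rightarrow> 'm) set \<Rightarrow> (('n \<Rightarrow> 'm) \<Rightarrow> real) set" where
  "zero_outside M S = {(\<lambda>m. if m = m0 then 1 else 0) | m0. m0 \<in> profiles M - S}"

lemma DeltaD_zero_outside:
  assumes "finite (profiles M)" and "\<forall>m. m \<notin> S \<longrightarrow> eta m = 0"
  shows "DeltaD M eta (zero_outside M S) = {q\<in>Delta (profiles M). \<forall>m\<in>profiles M - S. q m = 0}"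
proof -
  have point: "(\<Sum>m\<in>profiles M. q m * (if m = m0 then 1 else 0)) = q m0"
    if "m0 \<in> profiles M" for q :: "_ \<Rightarrow> real" and m0
    using assms that by (simp add: if_distrib[of "\<lambda>x. _ * x"] cong: if_cong)
  show ?thesis
    unfolding DeltaD_def zero_outside_def using assms by (auto simp: point)
qed

lemma maxent_belief_uniform:
  assumes "finite (profiles M)" "S \<subseteq> profiles M" "S \<noteq> {}"
    and "\<forall>m. m \<notin> S \<longrightarrow> eta m = 0"
  shows "is_maxent_belief M eta (zero_outside M S) (uniform S)"
  unfolding is_maxent_belief_def DeltaD_zero_outside[OF assms(1,4)]
  using uniform_in_Delta[OF assms(1-3)] entropy_le_uniform[OF assms(1-3)]
  by (auto simp: uniform_def)

locale empirical_correlated_eq =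
  fixes A :: "'n::finite \<Rightarrow> 'a set" and u :: "'n \<Rightarrow> ('n \<Rightarrow> 'a) \<Rightarrow> real"
    and p :: "('n \<Rightarrow> 'a) \<Rightarrow> real" and L :: "('n \<Rightarrow> 'a) list"
  assumes finite_actions: "\<And>i. finite (A i)" and ce: "correlated_eq A u p"
    and L_nonempty: "L \<noteq> []"
    and count_L: "\<And>a. real (count_list L a) = real (length L) * p a"
begin

abbreviation K :: nat where "K \<equiv> length L"

lemma K_pos: "K > 0"
  using L_nonempty by simp

lemma p_in_Delta: "p \<in> Delta (profiles A)"
  using ce by (simp add: correlated_eq_def)

lemma p_nonneg: "p a \<ge> 0"
  using p_in_Delta by (cases "a \<in> profiles A") (auto simp: Delta_def)

lemma in_set_L_iff: "a \<in> set L \<longleftrightarrow> p a > 0"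
  using p_nonneg[of a] count_L[of a] K_pos count_list_0_iff[of L a]
  by (metis mult_eq_0_iff not_gr0 of_nat_0_eq_iff order_less_le)

lemma set_L_subset: "set L \<subseteq> profiles A"
  using p_in_Delta by (auto simp: in_set_L_iff Delta_def)

lemma sum_nth_L: "(\<Sum>t<K. h (L ! t)) = real K * (\<Sum>a\<in>profiles A. p a * h a)"
proof -
  have "(\<Sum>t<K. h (L ! t)) = sum_list (map h L)"
    by (simp add: sum_list_sum_nth atLeast0LessThan)
  also have "\<dots> = (\<Sum>a\<in>set L. real K * (p a * h a))"
    by (simp add: sum_list_map_eq_sum_of_count count_L mult.assoc)
  also have "\<dots> = (\<Sum>a\<in>profiles A. real K * (p a * h a))"
    using set_L_subset finite_profiles[of A, OF finite_actions] p_in_Delta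
    by (intro sum.mono_neutral_left) (auto simp: in_set_L_iff Delta_def)
  finally show ?thesis by (simp add: sum_distrib_left)
qed

definition token :: "nat \<Rightarrow> 'n \<Rightarrow> 'a" where
  "token t = L ! (t mod K)"

definition secret :: "('n \<Rightarrow> nat) \<Rightarrow> nat" where
  "secret x = (\<Sum>j\<in>UNIV. x j) mod K"

definition label :: "'n \<Rightarrow> 'a \<Rightarrow> nat" where
  "label i b = (LEAST t. token t i = b)"

(* The pair (x i, b) is encoded as x i + K * label i b, where label i b < K is the first token
   recommending b to player i. *)
definition msg :: "('n \<Rightarrow> nat) \<Rightarrow> 'n \<Rightarrow> nat" where
  "msg x i = x i + K * label i (token (secret x) i)"

definition messages :: "'n \<Rightarrow> nat set" where
  "messages i = {..<K * K}"

definition sent :: "('n \<Rightarrow> nat) set" where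
  "sent = msg ` shares K"

definition recommend :: "'n \<Rightarrow> nat \<Rightarrow> 'a" where
  "recommend i mi = token (mi div K) i"

definition act :: "('n \<Rightarrow> nat) \<Rightarrow> 'n \<Rightarrow> 'a" where
  "act m i = recommend i (m i)"

definition eta :: "(('n \<Rightarrow> 'a) \<Rightarrow> real) \<Rightarrow> ('n \<Rightarrow> nat) \<Rightarrow> real" where
  "eta mu m = (if m \<in> sent then mu (act m) / real (card {m'\<in>sent. act m' = act m}) else 0)"

lemma token_in_set_L: "token t \<in> set L"
  using K_pos by (simp add: token_def)

lemma token_in_profiles: "token t \<in> profiles A"
  using token_in_set_L set_L_subset by blast

lemma token_action: "token t i \<in> A i"
  using token_in_profiles by (simp add: profiles_def)

lemma act_in_profiles: "act m \<in> profiles A"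
  using token_action by (simp add: act_def recommend_def profiles_def)

lemma secret_lt: "secret x < K"
  using K_pos by (simp add: secret_def)

lemma token_label: "token (label i (token t i)) i = token t i"
  unfolding label_def by (rule LeastI) (rule refl)

lemma label_lt: "label i (token (secret x) i) < K"
  using Least_le[of "\<lambda>t. token t i = token (secret x) i" "secret x"] secret_lt[of x]
  by (simp add: label_def)

lemma msg_mod: "x \<in> shares K \<Longrightarrow> msg x i mod K = x i"
  by (simp add: msg_def shares_def)

lemma msg_div: "x \<in> shares K \<Longrightarrow> msg x i div K = label i (token (secret x) i)"
  using K_pos by (simp add: msg_def shares_def)

lemma act_msg: "x \<in> shares K \<Longrightarrow> act (msg x) = token (secret x)"
  by (rule ext) (simp add: act_def recommend_def msg_div token_label)

lemma msg_eq_iff: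
  assumes "x \<in> shares K" "y \<in> shares K"
  shows "msg x i = msg y i \<longleftrightarrow> x i = y i \<and> token (secret x) i = token (secret y) i"
  using assms msg_mod[of _ i] msg_div[of _ i] token_label by (metis msg_def)

lemma inj_on_msg: "inj_on msg (shares K)"
  by (rule inj_onI) (metis ext msg_mod)

lemma msg_in_profiles: "x \<in> shares K \<Longrightarrow> msg x \<in> profiles messages"
proof -
  assume x: "x \<in> shares K"
  have "msg x i < K * K" for i
  proof -
    have "msg x i < K + K * label i (token (secret x) i)"
      using x by (simp add: msg_def shares_def)
    also have "\<dots> \<le> K * K"
      using label_lt[of i x] mult_le_mono2[of "Suc (label i (token (secret x) i))" K K] by simp
    finally show ?thesis .
  qed
  then show ?thesis by (simp add: profiles_def messages_def)
qed

lemma finite_messages: "finite (profiles messages)"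
  by (rule finite_profiles) (simp add: messages_def)

lemma sent_subset: "sent \<subseteq> profiles messages"
  using msg_in_profiles by (auto simp: sent_def)

lemma finite_sent: "finite sent"
  unfolding sent_def by (intro finite_imageI finite_shares)

lemma sent_nonempty: "sent \<noteq> {}"
  using K_pos by (auto simp: sent_def shares_def)

lemma token_pos: "p (token t) > 0"
  using token_in_set_L in_set_L_iff by blast

lemma sum_over_share_class:
  assumes "j \<noteq> i"
  shows "(\<Sum>x\<in>{x\<in>shares K. x i = v \<and> token (secret x) i = b}. h (token (secret x)))
       = real (card {x\<in>shares K. x i = v \<and> x j = 0}) * real K
           * (\<Sum>a\<in>{a\<in>profiles A. a i = b}. p a * h a)"
proof -
  define C where "C = card {x\<in>shares K. x i = v \<and> x j = 0}"
  define H where "H a = (if a i = b then h a else 0)" for a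
  have fin: "finite {x\<in>shares K. x i = v}" by (rule finite_subset[OF _ finite_shares]) auto
  then have "(\<Sum>x\<in>{x\<in>shares K. x i = v \<and> token (secret x) i = b}. h (token (secret x)))
      = (\<Sum>x\<in>{x\<in>shares K. x i = v}. H (token (secret x)))"
    by (simp add: H_def sum.inter_filter[symmetric] conj_assoc)
  also have "\<dots> = (\<Sum>t<K. \<Sum>x\<in>{x\<in>{x\<in>shares K. x i = v}. secret x = t}. H (token (secret x)))"
    using fin secret_lt by (intro sum.group[symmetric]) auto
  also have "\<dots> = (\<Sum>t<K. real C * H (L ! t))"
  proof (intro sum.cong refl)
    fix t assume "t \<in> {..<K}"
    then have "card {x\<in>{x\<in>shares K. x i = v}. secret x = t} = C"
      using card_shares_with_sum[OF assms] by (simp add: C_def secret_def conj_assoc)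
    then show "(\<Sum>x\<in>{x\<in>{x\<in>shares K. x i = v}. secret x = t}. H (token (secret x)))
        = real C * H (L ! t)"
      using \<open>t \<in> {..<K}\<close> by (simp add: token_def)
  qed
  also have "\<dots> = real C * real K * (\<Sum>a\<in>profiles A. p a * H a)"
    by (simp add: sum_distrib_left[symmetric] sum_nth_L)
  also have "(\<Sum>a\<in>profiles A. p a * H a) = (\<Sum>a\<in>{a\<in>profiles A. a i = b}. p a * h a)"
    using finite_profiles[of A, OF finite_actions]
    by (simp add: H_def sum.inter_filter if_distrib[of "\<lambda>x. _ * x"] cong: if_cong)
  finally show ?thesis by (simp add: C_def)
qed

lemma obedient_on_share_class:
  assumes "x0 \<in> shares K" and b: "b \<in> A i"
  shows "0 \<le> (\<Sum>x\<in>{x\<in>shares K. msg x i = msg x0 i}.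
                u i (token (secret x)) - u i ((token (secret x))(i := b)))"
proof (cases "\<forall>j. j = i")
  case True
  show ?thesis
    using correlated_eq_single_player[OF finite_actions ce True token_in_profiles token_pos b]
    by (intro sum_nonneg) simp
next
  case False
  then obtain j where "j \<noteq> i" by auto
  have "{x\<in>shares K. msg x i = msg x0 i}
      = {x\<in>shares K. x i = x0 i \<and> token (secret x) i = token (secret x0) i}"
    using msg_eq_iff assms by auto
  then have "(\<Sum>x\<in>{x\<in>shares K. msg x i = msg x0 i}.
                u i (token (secret x)) - u i ((token (secret x))(i := b)))
      = real (card {x\<in>shares K. x i = x0 i \<and> x j = 0}) * real K
          * (\<Sum>a\<in>{a\<in>profiles A. a i = token (secret x0) i}. p a * (u i a - u i (a(i := b))))"
    using sum_over_share_class[OF \<open>j \<noteq> i\<close>] by simp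
  then show ?thesis
    using correlated_eq_obedient[OF finite_actions ce token_in_profiles token_pos b] by simp
qed

lemma EU_recommend_deviation:
  assumes "b \<in> A i"
  shows "EU A u i (\<lambda>j. point_mass (recommend j (m j)))
           - EU A u i ((\<lambda>j. point_mass (recommend j (m j)))(i := point_mass b))
         = u i (act m) - u i ((act m)(i := b))"
proof -
  have "(act m)(i := b) \<in> profiles A"
    using act_in_profiles assms by (auto simp: profiles_def)
  moreover have "(\<lambda>j. point_mass (act m j))(i := point_mass b)
      = (\<lambda>j. point_mass (((act m)(i := b)) j))"
    by auto
  ultimately show ?thesis
    unfolding act_def[symmetric]
    by (simp only: EU_point_mass[OF finite_actions act_in_profiles] EU_point_mass[OF finite_actions])
qed

lemma uniform_sent_obedient:
  assumes pos: "(\<Sum>m\<in>{m\<in>profiles messages. m i = mi}. uniform sent m) > 0" and b: "b \<in> A i"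
  shows "0 \<le> (\<Sum>m\<in>{m\<in>profiles messages. m i = mi}. uniform sent m *
            (EU A u i (\<lambda>j. point_mass (recommend j (m j)))
             - EU A u i ((\<lambda>j. point_mass (recommend j (m j)))(i := point_mass b))))"
proof -
  define g where "g a = u i a - u i (a(i := b))" for a
  obtain m0 where "m0 \<in> profiles messages" "m0 i = mi" "uniform sent m0 \<noteq> 0"
    using pos by (metis (mono_tags, lifting) less_irrefl mem_Collect_eq sum.neutral)
  then obtain x0 where x0: "x0 \<in> shares K" "msg x0 i = mi"
    by (auto simp: uniform_def sent_def split: if_splits)
  have "(\<Sum>m\<in>{m\<in>profiles messages. m i = mi}. uniform sent m *
            (EU A u i (\<lambda>j. point_mass (recommend j (m j)))
             - EU A u i ((\<lambda>j. point_mass (recommend j (m j)))(i := point_mass b))))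
      = (\<Sum>m\<in>{m\<in>sent. m i = mi}. g (act m) / real (card sent))" (is "?S = _")
    using finite_messages sent_subset
    by (intro sum.mono_neutral_cong_right)
      (auto simp: EU_recommend_deviation[OF b] g_def uniform_def)
  also have "\<dots> = (\<Sum>m\<in>{m\<in>sent. m i = mi}. g (act m)) / real (card sent)"
    by (simp add: sum_divide_distrib)
  also have "{m\<in>sent. m i = mi} = msg ` {x\<in>shares K. msg x i = msg x0 i}"
    using x0 by (auto simp: sent_def)
  also have "(\<Sum>m\<in>msg ` {x\<in>shares K. msg x i = msg x0 i}. g (act m))
      = (\<Sum>x\<in>{x\<in>shares K. msg x i = msg x0 i}. g (token (secret x)))"
    using inj_on_msg by (subst sum.reindex) (auto intro: inj_on_subset simp: act_msg)
  finally have "?S = (\<Sum>x\<in>{x\<in>shares K. msg x i = msg x0 i}. g (token (secret x))) / real (card sent)" .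
  then show ?thesis
    unfolding g_def using obedient_on_share_class[OF x0(1) b] by simp
qed

lemma act_surj_on_support:
  assumes "p a > 0"
  shows "\<exists>m\<in>sent. act m = a"
proof -
  obtain t where t: "t < K" "L ! t = a"
    using assms in_set_L_iff by (metis in_set_conv_nth)
  fix i0 :: 'n
  define x where "x l = (if l = i0 then t else 0)" for l
  have x: "x \<in> shares K" using t K_pos by (simp add: x_def shares_def)
  have "secret x = t" using t by (simp add: secret_def x_def)
  then have "act (msg x) = a" using act_msg[OF x] t by (simp add: token_def)
  then show ?thesis using x by (auto simp: sent_def)
qed

lemma sum_eta_fiber:
  assumes "mu a \<noteq> 0 \<Longrightarrow> p a > 0"
  shows "(\<Sum>m\<in>{m\<in>sent. act m = a}. eta mu m) = mu a"
proof (cases "{m\<in>sent. act m = a} = {}")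
  case True
  then have "mu a = 0" using assms act_surj_on_support by blast
  then show ?thesis using True by (simp only: sum.empty)
next
  case False
  then have "card {m\<in>sent. act m = a} > 0" using finite_sent by (simp add: card_gt_0_iff)
  have "(\<Sum>m\<in>{m\<in>sent. act m = a}. eta mu m)
      = (\<Sum>m\<in>{m\<in>sent. act m = a}. mu a / real (card {m\<in>sent. act m = a}))"
    by (intro sum.cong) (auto simp: eta_def)
  then show ?thesis using \<open>card {m\<in>sent. act m = a} > 0\<close> by simp
qed

lemma compose_eta:
  assumes "\<And>a. mu a \<noteq> 0 \<Longrightarrow> p a > 0"
  shows "compose messages (eta mu) (\<lambda>i mi. point_mass (recommend i mi)) = mu"
proof
  fix a
  have "compose messages (eta mu) (\<lambda>i mi. point_mass (recommend i mi)) a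
      = (\<Sum>m\<in>profiles messages. if act m = a then eta mu m else 0)"
    unfolding compose_def
    by (intro sum.cong refl) (simp add: act_def[symmetric] prod_point_mass eq_commute)
  also have "\<dots> = (\<Sum>m\<in>{m\<in>sent. act m = a}. eta mu m)"
    using finite_messages sent_subset
    by (intro sum.mono_neutral_cong_right) (auto simp: eta_def)
  also have "\<dots> = mu a" using sum_eta_fiber assms by blast
  finally show "compose messages (eta mu) (\<lambda>i mi. point_mass (recommend i mi)) a = mu a" .
qed

lemma eta_in_Delta:
  assumes mu: "mu \<in> Delta (profiles A)" and supp: "\<And>a. mu a \<noteq> 0 \<Longrightarrow> p a > 0"
  shows "eta mu \<in> Delta (profiles messages)"
proof -
  have "sum (eta mu) (profiles messages) = sum (eta mu) sent"
    using finite_messages sent_subset by (intro sum.mono_neutral_right) (auto simp: eta_def)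
  also have "\<dots> = (\<Sum>a\<in>profiles A. \<Sum>m\<in>{m\<in>sent. act m = a}. eta mu m)"
    using finite_sent finite_profiles[of A, OF finite_actions] act_in_profiles
    by (intro sum.group[symmetric]) auto
  also have "\<dots> = 1" using mu sum_eta_fiber supp by (simp add: Delta_def)
  finally show ?thesis
    using mu act_in_profiles sent_subset by (auto simp: Delta_def eta_def)
qed

lemma implemented_eta:
  assumes "mu \<in> Delta (profiles A)" and "\<And>a. mu a \<noteq> 0 \<Longrightarrow> p a > 0"
  shows "implemented A u messages (eta mu) (zero_outside messages sent) mu"
  unfolding implemented_def
proof (intro exI conjI allI ballI impI)
  show "point_mass (recommend i mi) \<in> Delta (A i)" for i mi
    by (simp add: point_mass_in_Delta finite_actions recommend_def token_action)
  show "is_maxent_belief messages (eta mu) (zero_outside messages sent) (uniform sent)"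
    using finite_messages sent_subset sent_nonempty
    by (rule maxent_belief_uniform) (simp add: eta_def)
  show "mu = compose messages (eta mu) (\<lambda>i mi. point_mass (recommend i mi))"
    using compose_eta assms(2) by simp
qed (rule uniform_sent_obedient)

end

theorem lemma1:
  fixes A :: "'n::finite \<Rightarrow> 'a set"
    and u :: "'n \<Rightarrow> ('n \<Rightarrow> 'a) \<Rightarrow> real"
    and p :: "('n \<Rightarrow> 'a) \<Rightarrow> real"
  assumes fin: "\<forall>i. finite (A i)"
    and ce: "correlated_eq A u p"
    and rat: "\<forall>a. p a \<in> \<rat>"
  shows "\<exists>M :: 'n \<Rightarrow> nat set. (\<forall>i. finite (M i)) \<and>
           (\<forall>mu \<in> Delta (profiles A). {a. mu a \<noteq> 0} \<subseteq> {a. p a \<noteq> 0} \<longrightarrow>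
              (\<exists>eta F. eta \<in> Delta (profiles M) \<and> implemented A u M eta F mu))"
proof -
  have "p \<in> Delta (profiles A)" using ce by (simp add: correlated_eq_def)
  then obtain L where "L \<noteq> []" "\<And>a. real (count_list L a) = real (length L) * p a"
    using rational_distribution_empirical[OF finite_profiles] fin rat by metis
  then interpret empirical_correlated_eq A u p L
    using fin ce by unfold_locales auto
  show ?thesis
  proof (intro exI[of _ messages] conjI allI ballI impI)
    show "finite (messages i)" for i by (simp add: messages_def)
    fix mu assume mu: "mu \<in> Delta (profiles A)" and "{a. mu a \<noteq> 0} \<subseteq> {a. p a \<noteq> 0}"
    then have supp: "p a > 0" if "mu a \<noteq> 0" for a
      using that p_nonneg[of a] by auto
    show "\<exists>eta F. eta \<in> Delta (profiles messages) \<and> implemented A u messages eta F mu"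
      using eta_in_Delta[OF mu supp] implemented_eta[OF mu supp] by blast
  qed
qed

end
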